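(* Consider the following model. A principal P and an agent A interact over two periods $t\in\{1,2\}$. States $\omega_t\in\{0,1\}$ satisfy $\Pr[\omega_1=1]=\mu_0\in(0,1)$ and $\Pr[\omega_2=\omega\mid\omega_1=\omega]=\rho\in(1/2,1)$. In each period A chooses $e_t\in\{0,1\}$; if $e_t=1$ he observes $\omega_t$, if $e_t=0$ he observes $\omega_t$ with probability $\pi\in(0,1)$ and nothing otherwise. A reports $r_t\in\{\varnothing,\omega_t\}$ if he observed $\omega_t$, else $r_t=\varnothing$. P chooses $x=\hat x(r_1,r_2)\in\{0,1\}$ at the end of period 2. Payoffs: P gets $\mathbb{1}[x=\omega_2]-k(e_1+e_2)$, A gets $x-c(e_1+e_2)$, $c,k>0$. P commits to a mechanism ($\sigma_1\in\{0,1\}$, $\sigma_2:\{\varnothing,0,1\}\to\{0,1\}$, $\hat x$) and A best-responds, following the recommendation and disclosing when indifferent. Let $\kappa=k/(1-\pi)$ and $\gamma=c/(1-\pi)$. If $\kappa,\gamma\in(0,1-\rho]$, then the optimal mechanism coincides with the baseline mechanism: $\sigma_1=0$, $\sigma_2(r_1)=1$ for all $r_1$, with the efficient assignment $\hat x(r_1,r_2)=\mathbb{1}[r_2=1]$ (assigning $0$ if the requested period-2 result is not reported).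
   Context: The baseline mechanism is the one P would choose if she controlled testing directly and observed all revealed results; for $\kappa\le1-\rho$ it never tests in period 1, always tests in period 2, and sets $x=\omega_2$. *)

theory Defs
  imports Main "HOL.Real"
begin

text \<open>States, efforts and decisions in {0,1} are encoded as bool (True = 1).
  Reports are encoded as bool option (None = empty report, Some w = reported state w).\<close>

record mech =
  sig1 :: bool
  sig2 :: "bool option \<Rightarrow> bool"
  xhat :: "bool option \<Rightarrow> bool option \<Rightarrow> bool"

definition prior1 :: "real \<Rightarrow> bool \<Rightarrow> real" where
  "prior1 mu w = (if w then mu else 1 - mu)"

definition trans :: "real \<Rightarrow> bool \<Rightarrow> bool \<Rightarrow> real" where
  "trans rho w1 w2 = (if w1 = w2 then rho else 1 - rho)"

definition obsprob :: "real \<Rightarrow> bool \<Rightarrow> real" where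
  "obsprob pi e = (if e then 1 else pi)"

text \<open>probability of the observation event d (True = observed) given effort e\<close>
definition obsP :: "real \<Rightarrow> bool \<Rightarrow> bool \<Rightarrow> real" where
  "obsP pi e d = (if d then obsprob pi e else 1 - obsprob pi e)"

text \<open>Agent's belief that omega2 = 1 given belief p that omega1 = 1\<close>
definition q2 :: "real \<Rightarrow> real \<Rightarrow> real" where
  "q2 rho p = rho * p + (1 - rho) * (1 - p)"

definition rep2 :: "mech \<Rightarrow> bool option \<Rightarrow> bool \<Rightarrow> bool option" where
  "rep2 M r1 w = (if of_bool (xhat M r1 None) \<le> (of_bool (xhat M r1 (Some w)) :: real)
                  then Some w else None)"

definition valrep2 :: "mech \<Rightarrow> bool option \<Rightarrow> bool \<Rightarrow> real" where
  "valrep2 M r1 w = of_bool (xhat M r1 (rep2 M r1 w))"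

definition val2e :: "real \<Rightarrow> real \<Rightarrow> real \<Rightarrow> mech \<Rightarrow> real \<Rightarrow> bool option \<Rightarrow> bool \<Rightarrow> real" where
  "val2e rho pi c M p r1 e =
     obsprob pi e * (q2 rho p * valrep2 M r1 True + (1 - q2 rho p) * valrep2 M r1 False)
     + (1 - obsprob pi e) * of_bool (xhat M r1 None) - c * of_bool e"

definition eff2 :: "real \<Rightarrow> real \<Rightarrow> real \<Rightarrow> mech \<Rightarrow> real \<Rightarrow> bool option \<Rightarrow> bool" where
  "eff2 rho pi c M p r1 =
     (if val2e rho pi c M p r1 True = val2e rho pi c M p r1 False then sig2 M r1
      else val2e rho pi c M p r1 True > val2e rho pi c M p r1 False)"

definition V2 :: "real \<Rightarrow> real \<Rightarrow> real \<Rightarrow> mech \<Rightarrow> real \<Rightarrow> bool option \<Rightarrow> real" where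
  "V2 rho pi c M p r1 = val2e rho pi c M p r1 (eff2 rho pi c M p r1)"

definition rep1 :: "real \<Rightarrow> real \<Rightarrow> real \<Rightarrow> mech \<Rightarrow> bool \<Rightarrow> bool option" where
  "rep1 rho pi c M w =
     (if V2 rho pi c M (of_bool w) None \<le> V2 rho pi c M (of_bool w) (Some w)
      then Some w else None)"

definition V1rep :: "real \<Rightarrow> real \<Rightarrow> real \<Rightarrow> mech \<Rightarrow> bool \<Rightarrow> real" where
  "V1rep rho pi c M w = V2 rho pi c M (of_bool w) (rep1 rho pi c M w)"

definition val1e :: "real \<Rightarrow> real \<Rightarrow> real \<Rightarrow> real \<Rightarrow> mech \<Rightarrow> bool \<Rightarrow> real" where
  "val1e mu rho pi c M e =
     obsprob pi e * (mu * V1rep rho pi c M True + (1 - mu) * V1rep rho pi c M False)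
     + (1 - obsprob pi e) * V2 rho pi c M mu None - c * of_bool e"

definition eff1 :: "real \<Rightarrow> real \<Rightarrow> real \<Rightarrow> real \<Rightarrow> mech \<Rightarrow> bool" where
  "eff1 mu rho pi c M =
     (if val1e mu rho pi c M True = val1e mu rho pi c M False then sig1 M
      else val1e mu rho pi c M True > val1e mu rho pi c M False)"

definition UP :: "real \<Rightarrow> real \<Rightarrow> real \<Rightarrow> real \<Rightarrow> real \<Rightarrow> mech \<Rightarrow> real" where
  "UP mu rho pi c k M =
    (let e1 = eff1 mu rho pi c M in
     \<Sum>w1\<in>(UNIV::bool set). \<Sum>w2\<in>(UNIV::bool set). \<Sum>d1\<in>(UNIV::bool set).
       (let p = (if d1 then of_bool w1 else mu);
            r1 = (if d1 then rep1 rho pi c M w1 else None);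
            e2 = eff2 rho pi c M p r1 in
        \<Sum>d2\<in>(UNIV::bool set).
          (let r2 = (if d2 then rep2 M r1 w2 else None);
               x = xhat M r1 r2 in
           prior1 mu w1 * trans rho w1 w2 * obsP pi e1 d1 * obsP pi e2 d2
           * (of_bool (x = w2) - k * (of_bool e1 + of_bool e2)))))"

definition baseline :: mech where
  "baseline = \<lparr> sig1 = False, sig2 = (\<lambda>_. True),
                xhat = (\<lambda>r1 r2. r2 = Some True) \<rparr>"

end

theory Submission
  imports Defs
begin

text \<open>
  Whatever the agent does, the principal's decision is correct with probability at most 1,
  and at most \<open>\<pi> + (1 - \<pi>) \<rho>\<close> when nobody tests in period 2, since without the period-2
  result she can do no better than guess \<open>\<omega>\<^sub>2 = \<omega>\<^sub>1\<close>. As \<open>k \<le> (1 - \<pi>)(1 - \<rho>)\<close>, one test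
  is worth its cost, so no mechanism gives the principal more than the first-best payoff
  \<open>1 - k\<close>. The baseline attains it: its assignment does not depend on \<open>r\<^sub>1\<close>, so the agent
  never tests in period 1; and since \<open>c \<le> (1 - \<pi>)(1 - \<rho>)\<close> he always tests in period 2 and
  reports the result, so the decision is always correct at the cost of a single test.
\<close>

definition decision_accuracy ::
    "real \<Rightarrow> real \<Rightarrow> mech \<Rightarrow> bool option \<Rightarrow> bool \<Rightarrow> bool \<Rightarrow> real" where
  "decision_accuracy rho pi M r1 e2 w1 = (\<Sum>w2\<in>UNIV. \<Sum>d2\<in>UNIV.
     trans rho w1 w2 * obsP pi e2 d2
     * of_bool (xhat M r1 (if d2 then rep2 M r1 w2 else None) = w2))"

definition period2_payoff ::
    "real \<Rightarrow> real \<Rightarrow> real \<Rightarrow> mech \<Rightarrow> bool \<Rightarrow> bool option \<Rightarrow> bool \<Rightarrow> bool \<Rightarrow> real" where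
  "period2_payoff rho pi k M e1 r1 e2 w1 =
     decision_accuracy rho pi M r1 e2 w1 - k * (of_bool e1 + of_bool e2)"

lemma UP_eq_expected_period2_payoff:
  "UP mu rho pi c k M = (let e1 = eff1 mu rho pi c M in
     \<Sum>w1\<in>UNIV. \<Sum>d1\<in>UNIV.
       prior1 mu w1 * obsP pi e1 d1 *
       (let r1 = (if d1 then rep1 rho pi c M w1 else None)
        in period2_payoff rho pi k M e1 r1
             (eff2 rho pi c M (if d1 then of_bool w1 else mu) r1) w1))"
  unfolding UP_def period2_payoff_def decision_accuracy_def Let_def
  by (simp add: UNIV_bool trans_def obsP_def algebra_simps)

lemma period1_weights_nonneg:
  assumes "0 \<le> mu" "mu \<le> 1" "0 \<le> pi" "pi \<le> 1"
  shows "0 \<le> prior1 mu w1 * obsP pi e d1"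
  using assms by (simp add: prior1_def obsP_def obsprob_def)

lemma period1_weights_sum:
  "(\<Sum>w1\<in>UNIV. \<Sum>d1\<in>UNIV. prior1 mu w1 * obsP pi e d1 * a) = a"
  by (simp add: UNIV_bool prior1_def obsP_def algebra_simps)

lemma decision_accuracy_le_1:
  assumes "0 \<le> rho" "rho \<le> 1" "0 \<le> pi" "pi \<le> 1"
  shows "decision_accuracy rho pi M r1 e2 w1 \<le> 1"
proof -
  have "decision_accuracy rho pi M r1 e2 w1
        \<le> (\<Sum>w2\<in>UNIV. \<Sum>d2\<in>UNIV. trans rho w1 w2 * obsP pi e2 d2)"
    unfolding decision_accuracy_def using assms
    by (intro sum_mono mult_right_le_one_le mult_nonneg_nonneg)
       (auto simp: trans_def obsP_def obsprob_def)
  also have "\<dots> = 1"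
    by (simp add: UNIV_bool trans_def obsP_def algebra_simps)
  finally show ?thesis .
qed

lemma decision_accuracy_untested_le:
  assumes "1/2 \<le> rho" "rho \<le> 1" "0 \<le> pi" "pi \<le> 1"
  shows "decision_accuracy rho pi M r1 False w1 \<le> pi + (1 - pi) * rho"
proof -
  let ?x0 = "xhat M r1 None"
  have "decision_accuracy rho pi M r1 False w1
        = (\<Sum>w2\<in>UNIV. trans rho w1 w2 *
             (pi * of_bool (xhat M r1 (rep2 M r1 w2) = w2) + (1 - pi) * of_bool (?x0 = w2)))"
    by (simp add: decision_accuracy_def UNIV_bool obsP_def obsprob_def algebra_simps)
  also have "\<dots> \<le> (\<Sum>w2\<in>UNIV. trans rho w1 w2 * (pi + (1 - pi) * of_bool (?x0 = w2)))"
    using assms by (intro sum_mono mult_left_mono add_right_mono mult_right_le_one_le)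
                   (auto simp: trans_def)
  also have "\<dots> = pi + (1 - pi) * trans rho w1 ?x0"
    by (cases ?x0) (simp_all add: UNIV_bool trans_def algebra_simps)
  also have "\<dots> \<le> pi + (1 - pi) * rho"
    using assms by (intro add_left_mono mult_left_mono) (auto simp: trans_def)
  finally show ?thesis .
qed

lemma period2_payoff_le_first_best:
  assumes "1/2 \<le> rho" "rho \<le> 1" "0 \<le> pi" "pi \<le> 1" "0 \<le> k" "k \<le> (1 - pi) * (1 - rho)"
  shows "period2_payoff rho pi k M e1 r1 e2 w1 \<le> 1 - k"
proof (cases "e1 \<or> e2")
  case True
  then show ?thesis
    using decision_accuracy_le_1[of rho pi M r1 e2 w1] assms
    by (auto simp: period2_payoff_def)
next
  case False
  then show ?thesis
    using decision_accuracy_untested_le[OF assms(1-4), of M r1 w1] assms(6)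
    by (simp add: period2_payoff_def algebra_simps)
qed

lemma UP_le_first_best:
  assumes "0 \<le> mu" "mu \<le> 1" "1/2 \<le> rho" "rho \<le> 1" "0 \<le> pi" "pi \<le> 1"
    and "0 \<le> k" "k \<le> (1 - pi) * (1 - rho)"
  shows "UP mu rho pi c k M \<le> 1 - k"
proof -
  let ?e1 = "eff1 mu rho pi c M"
  have "UP mu rho pi c k M
        \<le> (\<Sum>w1\<in>UNIV. \<Sum>d1\<in>UNIV. prior1 mu w1 * obsP pi ?e1 d1 * (1 - k))"
    unfolding UP_eq_expected_period2_payoff Let_def
    using assms
    by (intro sum_mono mult_left_mono period2_payoff_le_first_best period1_weights_nonneg)
  then show ?thesis
    by (simp only: period1_weights_sum)
qed

lemma q2_ge_1_minus_rho:
  assumes "1/2 \<le> rho" "0 \<le> p" "p \<le> 1"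
  shows "1 - rho \<le> q2 rho p"
proof -
  have "0 \<le> (2 * rho - 1) * p" using assms by simp
  then show ?thesis unfolding q2_def by (simp add: algebra_simps)
qed

lemma val2e_baseline:
  "val2e rho pi c baseline p r1 e = obsprob pi e * q2 rho p - c * of_bool e"
  by (simp add: val2e_def valrep2_def rep2_def baseline_def)

lemma eff2_baseline:
  assumes "1/2 \<le> rho" "0 \<le> p" "p \<le> 1" "pi \<le> 1" "c \<le> (1 - pi) * (1 - rho)"
  shows "eff2 rho pi c baseline p r1"
proof -
  have "c \<le> (1 - pi) * q2 rho p"
    using assms q2_ge_1_minus_rho[OF assms(1-3)] mult_left_mono[of "1 - rho" "q2 rho p" "1 - pi"]
    by linarith
  then show ?thesis
    unfolding eff2_def val2e_baseline by (simp add: obsprob_def baseline_def algebra_simps)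
qed

lemma V2_baseline:
  assumes "1/2 \<le> rho" "0 \<le> p" "p \<le> 1" "pi \<le> 1" "c \<le> (1 - pi) * (1 - rho)"
  shows "V2 rho pi c baseline p r1 = q2 rho p - c"
  using eff2_baseline[OF assms] by (simp add: V2_def val2e_baseline obsprob_def)

lemma eff1_baseline:
  assumes "0 \<le> mu" "mu \<le> 1" "1/2 \<le> rho" "pi \<le> 1" "0 < c" "c \<le> (1 - pi) * (1 - rho)"
  shows "\<not> eff1 mu rho pi c baseline"
proof -
  note V2 = V2_baseline[OF assms(3) _ _ assms(4,6)]
  have V1rep: "V1rep rho pi c baseline w = q2 rho (of_bool w) - c" for w
    by (simp add: V1rep_def rep1_def V2)
  have "val1e mu rho pi c baseline True < val1e mu rho pi c baseline False"
    using assms by (simp add: val1e_def V1rep V2 obsprob_def q2_def algebra_simps)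
  then show ?thesis
    unfolding eff1_def by auto
qed

lemma decision_accuracy_baseline: "decision_accuracy rho pi baseline r1 True w1 = 1"
  by (simp add: decision_accuracy_def UNIV_bool baseline_def rep2_def obsP_def obsprob_def
                trans_def)

lemma UP_baseline:
  assumes "0 \<le> mu" "mu \<le> 1" "1/2 \<le> rho" "pi \<le> 1" "0 < c" "c \<le> (1 - pi) * (1 - rho)"
  shows "UP mu rho pi c k baseline = 1 - k"
proof -
  have "eff2 rho pi c baseline (if d1 then of_bool w1 else mu) r1" for d1 w1 r1
    using assms by (intro eff2_baseline) auto
  then have "period2_payoff rho pi k baseline (eff1 mu rho pi c baseline) r1
               (eff2 rho pi c baseline (if d1 then of_bool w1 else mu) r1) w1 = 1 - k"
    for d1 w1 r1
    using eff1_baseline[OF assms] by (simp add: period2_payoff_def decision_accuracy_baseline)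
  then show ?thesis
    unfolding UP_eq_expected_period2_payoff Let_def by (simp only: period1_weights_sum)
qed

theorem propositionC2:
  fixes mu0 rho pi c k :: real
  assumes "0 < mu0" "mu0 < 1"
    and "1/2 < rho" "rho < 1"
    and "0 < pi" "pi < 1"
    and "0 < c" "0 < k"
    and "k / (1 - pi) \<le> 1 - rho"
    and "c / (1 - pi) \<le> 1 - rho"
  shows "\<forall>M. UP mu0 rho pi c k M \<le> UP mu0 rho pi c k baseline"
proof
  fix M
  have k: "k \<le> (1 - pi) * (1 - rho)" and c: "c \<le> (1 - pi) * (1 - rho)"
    using assms by (simp_all add: pos_divide_le_eq mult.commute)
  have "UP mu0 rho pi c k M \<le> 1 - k"
    using assms k by (intro UP_le_first_best) auto
  also have "\<dots> = UP mu0 rho pi c k baseline"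
    using assms c by (intro UP_baseline[symmetric]) auto
  finally show "UP mu0 rho pi c k M \<le> UP mu0 rho pi c k baseline" .
qed

end
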